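(* Let $R$ be a von Neumann regular ring with $\omega(\Gamma'(R))<\infty$. Then $\Gamma'(R)$ is a perfect graph.
   Context: All rings are commutative with identity $1\neq 0$. $W^*(R)$ denotes the set of non-zero non-unit elements of $R$. The cozero-divisor graph $\Gamma'(R)$ is the simple graph with vertex set $W^*(R)$, in which distinct $a,b$ are adjacent iff $a\notin Rb$ and $b\notin Ra$. A ring $R$ is von Neumann regular if for every $r\in R$ there is $s\in R$ with $r=r^2s$. $\omega(G)$ is the clique number of a graph $G$ and $\chi(G)$ its chromatic number. A graph $G$ is perfect if every induced subgraph $H$ of $G$ satisfies $\omega(H)=\chi(H)$. *)

theory Defs
  imports Main "HOL-Library.Extended_Nat"
begin

definition von_neumann_regular :: "'a::comm_ring_1 itself \<Rightarrow> bool" where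
  "von_neumann_regular _ \<longleftrightarrow> (\<forall>r::'a. \<exists>s. r = r^2 * s)"

definition W_star :: "'a::comm_ring_1 set" where
  "W_star = {a. a \<noteq> 0 \<and> \<not> a dvd 1}"

definition cozero_adj :: "'a::comm_ring_1 \<Rightarrow> 'a \<Rightarrow> bool" where
  "cozero_adj a b \<longleftrightarrow> a \<noteq> b \<and> a \<notin> {r * b | r. True} \<and> b \<notin> {r * a | r. True}"

definition is_clique :: "('v \<Rightarrow> 'v \<Rightarrow> bool) \<Rightarrow> 'v set \<Rightarrow> bool" where
  "is_clique E S \<longleftrightarrow> (\<forall>x\<in>S. \<forall>y\<in>S. x \<noteq> y \<longrightarrow> E x y)"

definition clique_number :: "'v set \<Rightarrow> ('v \<Rightarrow> 'v \<Rightarrow> bool) \<Rightarrow> enat" where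
  "clique_number V E = Sup {enat (card S) | S. S \<subseteq> V \<and> finite S \<and> is_clique E S}"

definition proper_colouring :: "'v set \<Rightarrow> ('v \<Rightarrow> 'v \<Rightarrow> bool) \<Rightarrow> ('v \<Rightarrow> nat) \<Rightarrow> nat \<Rightarrow> bool" where
  "proper_colouring V E f k \<longleftrightarrow> (\<forall>x\<in>V. f x < k) \<and>
     (\<forall>x\<in>V. \<forall>y\<in>V. x \<noteq> y \<longrightarrow> E x y \<longrightarrow> f x \<noteq> f y)"

(* least number of colours; \<infinity> if no finite colouring exists *)
definition chromatic_number :: "'v set \<Rightarrow> ('v \<Rightarrow> 'v \<Rightarrow> bool) \<Rightarrow> enat" where
  "chromatic_number V E = Inf {enat k | k. \<exists>f. proper_colouring V E f k}"

definition perfect_graph :: "'v set \<Rightarrow> ('v \<Rightarrow> 'v \<Rightarrow> bool) \<Rightarrow> bool" where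
  "perfect_graph V E \<longleftrightarrow> (\<forall>H \<subseteq> V. clique_number H E = chromatic_number H E)"

end

theory Submission
  imports Defs
begin

text \<open>
  In a von Neumann regular ring every element generates the same principal ideal as an idempotent,
  so two vertices of the cozero-divisor graph are adjacent exactly when their idempotents are
  incomparable under divisibility: the graph is the incomparability graph of a preorder.
  A finite clique number forces the set of idempotents to be finite, since an infinite Boolean
  algebra of idempotents contains arbitrarily many pairwise orthogonal nonzero idempotents, and
  these form a clique.  For finite preorders Dilworth's theorem says that the minimal number of
  chains covering the preorder equals the size of its largest antichain; colouring by chains then
  shows that every induced subgraph has chromatic number equal to its clique number.
\<close>

section \<open>Dilworth's theorem for finite preorders\<close>

definition antichain :: "('a \<Rightarrow> 'a \<Rightarrow> bool) \<Rightarrow> 'a set \<Rightarrow> bool" where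
  "antichain le A \<longleftrightarrow> (\<forall>x\<in>A. \<forall>y\<in>A. x \<noteq> y \<longrightarrow> \<not> le x y)"

definition width :: "('a \<Rightarrow> 'a \<Rightarrow> bool) \<Rightarrow> 'a set \<Rightarrow> nat" where
  "width le S = Max {card A | A. A \<subseteq> S \<and> antichain le A}"

definition chain_colouring :: "('a \<Rightarrow> 'a \<Rightarrow> bool) \<Rightarrow> 'a set \<Rightarrow> ('a \<Rightarrow> nat) \<Rightarrow> nat \<Rightarrow> bool" where
  "chain_colouring le S c n \<longleftrightarrow>
     (\<forall>x\<in>S. c x < n) \<and> (\<forall>i. Complete_Partial_Order.chain le {x\<in>S. c x = i})"

lemma finite_antichain_sizes:
  assumes "finite S"
  shows "finite {card A | A. A \<subseteq> S \<and> antichain le A}"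
    and "{card A | A. A \<subseteq> S \<and> antichain le A} \<noteq> {}"
proof -
  show "finite {card A | A. A \<subseteq> S \<and> antichain le A}"
    by (rule finite_subset[of _ "{..card S}"]) (auto intro: card_mono assms)
  have "antichain le {}" by (simp add: antichain_def)
  then show "{card A | A. A \<subseteq> S \<and> antichain le A} \<noteq> {}" by blast
qed

lemma card_le_width:
  assumes "finite S" "A \<subseteq> S" "antichain le A"
  shows "card A \<le> width le S"
  unfolding width_def
  by (rule Max_ge[OF finite_antichain_sizes(1)[OF assms(1)]]) (use assms(2,3) in blast)

lemma width_attained:
  assumes "finite S"
  obtains A where "A \<subseteq> S" "antichain le A" "card A = width le S"
proof -
  have "width le S \<in> {card A | A. A \<subseteq> S \<and> antichain le A}"
    unfolding width_def using finite_antichain_sizes[OF assms] by (rule Max_in)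
  then show ?thesis using that by auto
qed

lemma chain_colouring_mono:
  "chain_colouring le S c n \<Longrightarrow> n \<le> m \<Longrightarrow> chain_colouring le S c m"
  unfolding chain_colouring_def by (meson order_less_le_trans)

lemma chain_colouring_extend:
  assumes "chain_colouring le (S - K) g n" "Complete_Partial_Order.chain le K"
  shows "chain_colouring le S (\<lambda>z. if z \<in> K then n else g z) (Suc n)"
proof -
  have "Complete_Partial_Order.chain le {x \<in> S. (if x \<in> K then n else g x) = i}" for i
  proof (cases "i = n")
    case True
    then have "{x \<in> S. (if x \<in> K then n else g x) = i} \<subseteq> K"
      using assms(1) by (auto simp: chain_colouring_def)
    then show ?thesis using assms(2) chain_subset by blast
  next
    case False
    then have "{x \<in> S. (if x \<in> K then n else g x) = i} = {x \<in> S - K. g x = i}" by auto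
    then show ?thesis using assms(1) by (simp add: chain_colouring_def)
  qed
  moreover have "\<forall>x\<in>S. (if x \<in> K then n else g x) < Suc n"
    using assms(1) by (auto simp: chain_colouring_def less_Suc_eq)
  ultimately show ?thesis by (simp add: chain_colouring_def)
qed

lemma inj_on_chain_colouring_antichain:
  assumes "chain_colouring le S c n" "B \<subseteq> S" "antichain le B"
  shows "inj_on c B"
proof (rule inj_onI)
  fix x y assume xy: "x \<in> B" "y \<in> B" "c x = c y"
  have "Complete_Partial_Order.chain le {z \<in> S. c z = c x}"
    using assms(1) by (simp add: chain_colouring_def)
  then have "le x y \<or> le y x" using xy assms(2) by (auto simp: chain_def)
  then show "x = y" using assms(3) xy unfolding antichain_def by auto
qed

lemma card_antichain_le_colours:
  assumes "chain_colouring le S c n" "B \<subseteq> S" "antichain le B"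
  shows "card B \<le> n"
proof -
  have "c ` B \<subseteq> {..<n}" using assms(1,2) by (auto simp: chain_colouring_def)
  with card_inj_on_le[OF inj_on_chain_colouring_antichain[OF assms]] show ?thesis
    by (metis card_lessThan finite_lessThan)
qed

lemma antichain_meets_every_colour:
  assumes "chain_colouring le S c n" "B \<subseteq> S" "antichain le B" "card B = n" "i < n"
  shows "\<exists>y\<in>B. c y = i"
proof -
  have sub: "c ` B \<subseteq> {..<n}" using assms(1,2) by (auto simp: chain_colouring_def)
  have "card (c ` B) = n"
    using card_image[OF inj_on_chain_colouring_antichain[OF assms(1-3)]] assms(4) by simp
  then have "c ` B = {..<n}" using sub by (simp add: card_subset_eq)
  then show ?thesis using assms(5) by (metis imageE lessThan_iff)
qed

lemma finite_chain_has_greatest: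
  assumes "transp le" "finite C" "C \<noteq> {}" "Complete_Partial_Order.chain le C"
  shows "\<exists>m\<in>C. \<forall>y\<in>C. le y m"
  using assms(2-4)
proof (induction C rule: finite_ne_induct)
  case (singleton x)
  then show ?case by (simp add: chain_def)
next
  case (insert x F)
  then have "Complete_Partial_Order.chain le F" using chain_subset by blast
  with insert.IH obtain m where m: "m \<in> F" "\<forall>y\<in>F. le y m" by blast
  have xx: "le x x" using insert.prems by (simp add: chain_def)
  show ?case
  proof (cases "le x m")
    case True
    then show ?thesis using m by auto
  next
    case False
    then have "le m x" using insert.prems m(1) by (auto simp: chain_def)
    then have "\<forall>y\<in>F. le y x" using m(2) transpD[OF assms(1)] by blast
    then show ?thesis using xx by auto
  qed
qed

lemma finite_has_maximal_wrt:
  assumes "transp le" "finite S" "S \<noteq> {}"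
  shows "\<exists>m\<in>S. \<forall>x\<in>S. le m x \<longrightarrow> le x m"
  using assms(2,3)
proof (induction S rule: finite_ne_induct)
  case (singleton x)
  show ?case by simp
next
  case (insert x F)
  then obtain m where m: "m \<in> F" "\<forall>y\<in>F. le m y \<longrightarrow> le y m" by blast
  show ?case
  proof (cases "le m x \<and> \<not> le x m")
    case True
    have "le y x" if "y \<in> F" "le x y" for y
    proof -
      have "le m y" using True that(2) assms(1) by (blast dest: transpD)
      then have "le y m" using m(2) that(1) by blast
      then show ?thesis using True assms(1) by (blast dest: transpD)
    qed
    then show ?thesis by blast
  next
    case False
    then have "\<forall>y\<in>insert x F. le m y \<longrightarrow> le y m" using m(2) by auto
    then show ?thesis using m(1) by (intro bexI[of _ m]) auto
  qed
qed

text \<open>Here \<open>x i\<close> is the largest element of colour \<open>i\<close> lying on a maximum antichain.\<close>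

lemma maximum_antichains_bounded_by_representatives:
  assumes "transp le" "finite S" "chain_colouring le S f n"
    and "A \<subseteq> S" "antichain le A" "card A = n"
  obtains x where "\<And>i. i < n \<Longrightarrow> x i \<in> S \<and> f (x i) = i"
    and "antichain le (x ` {..<n})"
    and "\<And>B i. B \<subseteq> S \<Longrightarrow> antichain le B \<Longrightarrow> card B = n \<Longrightarrow> i < n \<Longrightarrow>
           \<exists>y\<in>B. f y = i \<and> le y (x i)"
proof -
  define M where "M i = {y \<in> S. f y = i \<and> (\<exists>B\<subseteq>S. antichain le B \<and> card B = n \<and> y \<in> B)}" for i
  have "\<exists>m\<in>M i. \<forall>y\<in>M i. le y m" if "i < n" for i
  proof (rule finite_chain_has_greatest[OF assms(1)])
    show "finite (M i)" using assms(2) by (simp add: M_def)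
    show "M i \<noteq> {}" using antichain_meets_every_colour[OF assms(3-6) that] assms(4-6)
      unfolding M_def by blast
    have "Complete_Partial_Order.chain le {y \<in> S. f y = i}"
      using assms(3) by (simp add: chain_colouring_def)
    then show "Complete_Partial_Order.chain le (M i)"
      by (rule chain_subset) (auto simp: M_def)
  qed
  then obtain x where x: "\<And>i. i < n \<Longrightarrow> x i \<in> M i \<and> (\<forall>y\<in>M i. le y (x i))"
    by metis
  have below: "\<exists>y\<in>B. f y = i \<and> le y (x i)"
    if B: "B \<subseteq> S" "antichain le B" "card B = n" and i: "i < n" for B i
  proof -
    obtain y where "y \<in> B" "f y = i"
      using antichain_meets_every_colour[OF assms(3) B i] by blast
    moreover from this have "y \<in> M i" using B unfolding M_def by blast
    ultimately show ?thesis using x[OF i] by blast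
  qed
  have "antichain le (x ` {..<n})"
    unfolding antichain_def
  proof (intro ballI impI notI)
    fix p q assume "p \<in> x ` {..<n}" "q \<in> x ` {..<n}" "p \<noteq> q" "le p q"
    then obtain i j where ij: "i < n" "j < n" "p = x i" "q = x j" "i \<noteq> j" by auto
    from x[OF ij(2)] obtain B
      where B: "B \<subseteq> S" "antichain le B" "card B = n" "x j \<in> B" "f (x j) = j"
      unfolding M_def by blast
    obtain y where "y \<in> B" "f y = i" "le y (x i)" using below[OF B(1-3) ij(1)] by blast
    moreover have "le y (x j)" using calculation(3) \<open>le p q\<close> ij(3,4) transpD[OF assms(1)] by blast
    moreover have "y \<noteq> x j" using calculation(2) B(5) ij(5) by auto
    ultimately show False using B(2,4) unfolding antichain_def by blast
  qed
  moreover have "x i \<in> S \<and> f (x i) = i" if "i < n" for i using x[OF that] by (simp add: M_def)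
  ultimately show ?thesis using that below by blast
qed

lemma width_remove_lower_part_of_colour:
  assumes "finite S" "chain_colouring le S f n" "i < n"
    and "\<And>B. B \<subseteq> S \<Longrightarrow> antichain le B \<Longrightarrow> card B = n \<Longrightarrow> \<exists>y\<in>B. f y = i \<and> le y t"
  shows "width le (S - {z \<in> S. f z = i \<and> le z t}) < n"
proof -
  let ?L = "{z \<in> S. f z = i \<and> le z t}"
  obtain B where B: "B \<subseteq> S - ?L" "antichain le B" "card B = width le (S - ?L)"
    using width_attained[of "S - ?L"] assms(1) by auto
  have "B \<subseteq> S" using B(1) by blast
  have "card B \<noteq> n"
  proof
    assume "card B = n"
    then obtain y where "y \<in> B" "f y = i" "le y t" using assms(4)[OF \<open>B \<subseteq> S\<close> B(2)] by blast
    then show False using B(1) by blast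
  qed
  then show ?thesis using card_antichain_le_colours[OF assms(2) \<open>B \<subseteq> S\<close> B(2)] B(3) by simp
qed

lemma chain_insert_lower_part_of_colour:
  assumes "reflp le" "transp le" "chain_colouring le S f n" "le t a"
  shows "Complete_Partial_Order.chain le (insert a {z \<in> S. f z = i \<and> le z t})"
    (is "Complete_Partial_Order.chain le ?K")
proof (rule chainI)
  fix y z assume yz: "y \<in> ?K" "z \<in> ?K"
  have to_a: "le u a" if "u \<in> ?K" for u
    using that assms(4) reflpD[OF assms(1)] transpD[OF assms(2)] by blast
  have "Complete_Partial_Order.chain le {z \<in> S. f z = i}"
    using assms(3) by (simp add: chain_colouring_def)
  then show "le y z \<or> le z y" using yz to_a by (auto simp: chain_def)
qed

text \<open>
  Galvin's induction step.  If the maximal element \<open>a\<close> lies above none of the representatives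
  \<open>x i\<close>, adding it to them yields a larger antichain; otherwise \<open>a\<close> together with the elements
  of colour \<open>i\<close> below \<open>x i\<close> is a chain meeting every maximum antichain of \<open>S - {a}\<close>.
\<close>

lemma exists_chain_reducing_width:
  assumes "reflp le" "transp le" "finite S" "a \<in> S" "\<forall>x\<in>S. le a x \<longrightarrow> le x a"
    and "chain_colouring le (S - {a}) f (width le (S - {a}))"
  obtains K where "Complete_Partial_Order.chain le K" "a \<in> K" "K \<subseteq> S"
    and "width le (S - K) < width le S"
proof -
  let ?S' = "S - {a}" and ?w = "width le (S - {a})"
  have fin': "finite ?S'" using assms(3) by simp
  obtain A where "A \<subseteq> ?S'" "antichain le A" "card A = ?w" using width_attained[OF fin'] .
  then obtain x where x: "\<And>i. i < ?w \<Longrightarrow> x i \<in> ?S' \<and> f (x i) = i"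
    and X_antichain: "antichain le (x ` {..<?w})"
    and below: "\<And>B i. B \<subseteq> ?S' \<Longrightarrow> antichain le B \<Longrightarrow> card B = ?w \<Longrightarrow> i < ?w \<Longrightarrow>
                  \<exists>y\<in>B. f y = i \<and> le y (x i)"
    using maximum_antichains_bounded_by_representatives[OF assms(2) fin' assms(6)] by metis
  define X where "X = x ` {..<?w}"
  have X_sub: "X \<subseteq> ?S'" using x by (auto simp: X_def)
  have "inj_on x {..<?w}" by (rule inj_onI) (metis x lessThan_iff)
  then have card_X: "card X = ?w" by (simp add: X_def card_image)
  have w_le: "?w \<le> width le S"
    using card_le_width[OF assms(3) _ X_antichain] X_sub card_X by (auto simp: X_def)
  show ?thesis
  proof (cases "\<exists>i<?w. le (x i) a")
    case False
    have "\<not> le z a \<and> \<not> le a z" if "z \<in> X" for z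
      using False assms(5) X_sub that unfolding X_def by blast
    then have "antichain le (insert a X)"
      using X_antichain unfolding antichain_def X_def by auto
    moreover have "insert a X \<subseteq> S" using X_sub assms(4) by auto
    ultimately have "card (insert a X) \<le> width le S" using card_le_width[OF assms(3)] by blast
    moreover have "card (insert a X) = Suc ?w"
      using X_sub card_X finite_subset[OF X_sub fin'] by (simp add: subset_Diff_insert)
    ultimately have "?w < width le S" by simp
    moreover have "Complete_Partial_Order.chain le {a}"
      using assms(1) by (simp add: chain_def reflpD)
    ultimately show ?thesis using that assms(4) by blast
  next
    case True
    then obtain i where i: "i < ?w" "le (x i) a" by blast
    define K where "K = insert a {z \<in> ?S'. f z = i \<and> le z (x i)}"
    have chain_K: "Complete_Partial_Order.chain le K"
      unfolding K_def using chain_insert_lower_part_of_colour[OF assms(1,2,6) i(2)] .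
    have "S - K = ?S' - {z \<in> ?S'. f z = i \<and> le z (x i)}" by (auto simp: K_def)
    moreover have "\<And>B. B \<subseteq> ?S' \<Longrightarrow> antichain le B \<Longrightarrow> card B = ?w \<Longrightarrow>
                     \<exists>y\<in>B. f y = i \<and> le y (x i)"
      using below i(1) by blast
    ultimately have "width le (S - K) < ?w"
      using width_remove_lower_part_of_colour[OF fin' assms(6) i(1)] by simp
    then show ?thesis using that[OF chain_K] w_le assms(4) unfolding K_def by auto
  qed
qed

theorem dilworth:
  assumes "reflp le" "transp le" "finite S"
  shows "\<exists>c. chain_colouring le S c (width le S)"
  using assms(3)
proof (induction S rule: finite_psubset_induct)
  case (psubset S)
  show ?case
  proof (cases "S = {}")
    case True
    then show ?thesis by (simp add: chain_colouring_def chain_def)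
  next
    case False
    obtain a where a: "a \<in> S" "\<forall>x\<in>S. le a x \<longrightarrow> le x a"
      using finite_has_maximal_wrt[OF assms(2) psubset.hyps False] by blast
    obtain f where "chain_colouring le (S - {a}) f (width le (S - {a}))"
      using psubset.IH[of "S - {a}"] a(1) by blast
    then obtain K where K: "Complete_Partial_Order.chain le K" "a \<in> K" "K \<subseteq> S"
        "width le (S - K) < width le S"
      using exists_chain_reducing_width[OF assms(1,2) psubset.hyps a] by blast
    obtain g where "chain_colouring le (S - K) g (width le (S - K))"
      using psubset.IH[of "S - K"] K(2,3) by blast
    then have "chain_colouring le S (\<lambda>z. if z \<in> K then width le (S - K) else g z)
                 (Suc (width le (S - K)))"
      using K(1) by (rule chain_colouring_extend)
    then show ?thesis using K(4) chain_colouring_mono Suc_leI by blast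
  qed
qed

section \<open>Incomparability graphs of finite preorders are perfect\<close>

lemma clique_number_le_chromatic_number: "clique_number V E \<le> chromatic_number V E"
  unfolding clique_number_def chromatic_number_def
proof (rule Sup_least)
  fix x assume "x \<in> {enat (card S) | S. S \<subseteq> V \<and> finite S \<and> is_clique E S}"
  then obtain S where S: "x = enat (card S)" "S \<subseteq> V" "is_clique E S" by blast
  show "x \<le> Inf {enat k | k. \<exists>f. proper_colouring V E f k}"
  proof (rule Inf_greatest)
    fix y assume "y \<in> {enat k | k. \<exists>f. proper_colouring V E f k}"
    then obtain k f where y: "y = enat k" "proper_colouring V E f k" by blast
    have "inj_on f S"
    proof (rule inj_onI)
      fix p q assume "p \<in> S" "q \<in> S" "f p = f q"
      then show "p = q" using y(2) S(2,3) unfolding proper_colouring_def is_clique_def by blast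
    qed
    moreover have "f ` S \<subseteq> {..<k}" using y(2) S(2) unfolding proper_colouring_def by auto
    ultimately have "card S \<le> k" by (metis card_inj_on_le card_lessThan finite_lessThan)
    then show "x \<le> y" using S(1) y(1) by simp
  qed
qed

lemma chromatic_number_le: "proper_colouring V E f k \<Longrightarrow> chromatic_number V E \<le> enat k"
  unfolding chromatic_number_def by (rule Inf_lower) blast

lemma card_le_clique_number:
  "S \<subseteq> V \<Longrightarrow> finite S \<Longrightarrow> is_clique E S \<Longrightarrow> enat (card S) \<le> clique_number V E"
  unfolding clique_number_def by (rule Sup_upper) blast

lemma width_le_clique_number:
  assumes "finite (\<phi> ` V)"
    and "\<And>x y. x \<in> V \<Longrightarrow> y \<in> V \<Longrightarrow> x \<noteq> y \<Longrightarrow>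
           \<not> le (\<phi> x) (\<phi> y) \<Longrightarrow> \<not> le (\<phi> y) (\<phi> x) \<Longrightarrow> E x y"
  shows "enat (width le (\<phi> ` V)) \<le> clique_number V E"
proof -
  obtain A where A: "A \<subseteq> \<phi> ` V" "antichain le A" "card A = width le (\<phi> ` V)"
    using width_attained[OF assms(1)] .
  define g where "g = inv_into V \<phi>"
  have g: "g t \<in> V" "\<phi> (g t) = t" if "t \<in> A" for t
    using A(1) that unfolding g_def by (auto intro: inv_into_into f_inv_into_f)
  have "inj_on g A" using g(2) by (metis inj_onI)
  then have "card (g ` A) = card A" by (rule card_image)
  moreover have "is_clique E (g ` A)"
    unfolding is_clique_def
  proof (intro ballI impI)
    fix p q assume "p \<in> g ` A" "q \<in> g ` A" "p \<noteq> q"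
    then obtain t u where "t \<in> A" "u \<in> A" "p = g t" "q = g u" "t \<noteq> u" by auto
    then show "E p q" using A(2) g assms(2) unfolding antichain_def by metis
  qed
  moreover have "finite (g ` A)" using finite_subset[OF A(1) assms(1)] by simp
  ultimately show ?thesis
    using card_le_clique_number[of "g ` A" V E] g(1) A(3) by auto
qed

lemma proper_colouring_chain_colouring_comp:
  assumes "chain_colouring le (\<phi> ` V) c n"
    and "\<And>x y. x \<in> V \<Longrightarrow> y \<in> V \<Longrightarrow> E x y \<Longrightarrow> \<not> le (\<phi> x) (\<phi> y) \<and> \<not> le (\<phi> y) (\<phi> x)"
  shows "proper_colouring V E (c \<circ> \<phi>) n"
  unfolding proper_colouring_def
proof (intro conjI ballI impI)
  fix x assume "x \<in> V"
  then show "(c \<circ> \<phi>) x < n" using assms(1) by (simp add: chain_colouring_def)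
next
  fix x y assume xy: "x \<in> V" "y \<in> V" "x \<noteq> y" "E x y"
  have "Complete_Partial_Order.chain le {z \<in> \<phi> ` V. c z = c (\<phi> x)}"
    using assms(1) by (simp add: chain_colouring_def)
  then have "c (\<phi> y) = c (\<phi> x) \<Longrightarrow> le (\<phi> x) (\<phi> y) \<or> le (\<phi> y) (\<phi> x)"
    using xy(1,2) by (auto simp: chain_def)
  then show "(c \<circ> \<phi>) x \<noteq> (c \<circ> \<phi>) y" using assms(2)[OF xy(1,2,4)] by auto
qed

theorem perfect_graph_incomparability:
  assumes "reflp le" "transp le" "finite (\<phi> ` V)"
    and adj: "\<And>x y. x \<in> V \<Longrightarrow> y \<in> V \<Longrightarrow>
                E x y \<longleftrightarrow> x \<noteq> y \<and> \<not> le (\<phi> x) (\<phi> y) \<and> \<not> le (\<phi> y) (\<phi> x)"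
  shows "perfect_graph V E"
  unfolding perfect_graph_def
proof (intro allI impI)
  fix H assume "H \<subseteq> V"
  then have fin: "finite (\<phi> ` H)" using assms(3) by (meson finite_subset image_mono)
  obtain c where "chain_colouring le (\<phi> ` H) c (width le (\<phi> ` H))"
    using dilworth[OF assms(1,2) fin] ..
  then have "proper_colouring H E (c \<circ> \<phi>) (width le (\<phi> ` H))"
    by (rule proper_colouring_chain_colouring_comp) (use adj \<open>H \<subseteq> V\<close> in blast)
  then have "chromatic_number H E \<le> enat (width le (\<phi> ` H))" by (rule chromatic_number_le)
  also have "\<dots> \<le> clique_number H E"
    using width_le_clique_number[OF fin] adj \<open>H \<subseteq> V\<close> by blast
  finally show "clique_number H E = chromatic_number H E"
    using clique_number_le_chromatic_number antisym by blast
qed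

section \<open>Idempotents and the cozero-divisor graph\<close>

definition idempotents_below :: "'a::comm_ring_1 \<Rightarrow> 'a set" where
  "idempotents_below e = {f. f * f = f \<and> f * e = f}"

definition orthogonal_idempotents :: "'a::comm_ring_1 set \<Rightarrow> bool" where
  "orthogonal_idempotents S \<longleftrightarrow> 0 \<notin> S \<and> (\<forall>x\<in>S. x * x = x) \<and> pairwise (\<lambda>x y. x * y = 0) S"

lemma idempotents_below_trans:
  "u \<in> idempotents_below e \<Longrightarrow> idempotents_below u \<subseteq> idempotents_below e"
  unfolding idempotents_below_def by (auto, metis mult.assoc)

lemma idempotents_below_split_infinite:
  fixes e f :: "'a::comm_ring_1"
  assumes e: "e * e = e" and f: "f \<in> idempotents_below e"
    and inf: "infinite (idempotents_below e)"
  shows "infinite (idempotents_below f) \<or> infinite (idempotents_below (e - f))"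
proof (rule ccontr)
  assume "\<not> ?thesis"
  then have fin: "finite (idempotents_below f \<times> idempotents_below (e - f))" by simp
  have ff: "f * f = f" and fe: "f * e = f" using f by (auto simp: idempotents_below_def)
  let ?split = "\<lambda>g. (g * f, g * (e - f))"
  have "?split ` idempotents_below e \<subseteq> idempotents_below f \<times> idempotents_below (e - f)"
  proof (intro image_subsetI)
    fix g assume "g \<in> idempotents_below e"
    then have gg: "g * g = g" by (simp add: idempotents_below_def)
    have "g * f * (g * f) = (g * g) * (f * f)"
      and "g * (e - f) * (g * (e - f)) = (g * g) * ((e - f) * (e - f))"
      by (simp_all add: ac_simps)
    moreover have "(e - f) * (e - f) = e - f" using e ff fe by (simp add: algebra_simps)
    ultimately show "?split g \<in> idempotents_below f \<times> idempotents_below (e - f)"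
      using gg ff by (simp add: idempotents_below_def mult.assoc)
  qed
  moreover have "inj_on ?split (idempotents_below e)"
  proof (rule inj_onI)
    fix g h assume g: "g \<in> idempotents_below e" and h: "h \<in> idempotents_below e"
      and "?split g = ?split h"
    have "g = g * f + g * (e - f)" using g by (simp add: idempotents_below_def algebra_simps)
    also have "\<dots> = h * f + h * (e - f)" using \<open>?split g = ?split h\<close> by simp
    also have "\<dots> = h" using h by (simp add: idempotents_below_def algebra_simps)
    finally show "g = h" .
  qed
  ultimately have "finite (idempotents_below e)"
    using fin by (meson finite_imageD finite_subset)
  with inf show False ..
qed

lemma orthogonal_idempotents_insert:
  fixes u v :: "'a::comm_ring_1"
  assumes S: "orthogonal_idempotents S" "S \<subseteq> idempotents_below u"
    and v: "v * v = v" "u * v = 0" "v \<noteq> 0"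
  shows "orthogonal_idempotents (insert v S)" and "v \<notin> S"
proof -
  have sv: "s * v = 0" if "s \<in> S" for s
  proof -
    have "s * u = s" using S(2) that by (auto simp: idempotents_below_def)
    then have "s * v = s * (u * v)" by (simp add: mult.assoc[symmetric])
    then show ?thesis using v(2) by simp
  qed
  show "v \<notin> S" using sv v by force
  show "orthogonal_idempotents (insert v S)"
    using S(1) sv v by (simp add: orthogonal_idempotents_def pairwise_insert mult.commute)
qed

lemma exists_orthogonal_idempotents_below:
  fixes e :: "'a::comm_ring_1"
  assumes "e * e = e" "infinite (idempotents_below e)"
  shows "\<exists>S \<subseteq> idempotents_below e. finite S \<and> card S = n \<and> orthogonal_idempotents S"
  using assms
proof (induction n arbitrary: e)
  case 0
  show ?case by (intro exI[of _ "{}"]) (simp add: orthogonal_idempotents_def)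
next
  case (Suc n)
  have step: "\<exists>S \<subseteq> idempotents_below e. finite S \<and> card S = Suc n \<and> orthogonal_idempotents S"
    if u: "u \<in> idempotents_below e" "infinite (idempotents_below u)"
      and v: "v \<in> idempotents_below e" "u * v = 0" "v \<noteq> 0" for u v
  proof -
    have "u * u = u" using u(1) by (simp add: idempotents_below_def)
    from Suc.IH[OF this u(2)] obtain S where
      S: "S \<subseteq> idempotents_below u" "finite S" "card S = n" "orthogonal_idempotents S" by blast
    have vv: "v * v = v" using v(1) by (simp add: idempotents_below_def)
    have "insert v S \<subseteq> idempotents_below e"
      using S(1) idempotents_below_trans[OF u(1)] v(1) by blast
    then show ?thesis
      using orthogonal_idempotents_insert[OF S(4,1) vv v(2,3)] S(2,3)
      by (intro exI[of _ "insert v S"]) simp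
  qed
  have "infinite (idempotents_below e - {0, e})" using Suc.prems(2) by simp
  then obtain f where f: "f \<in> idempotents_below e" "f \<noteq> 0" "f \<noteq> e"
    by (metis Diff_iff finite.emptyI insertCI ex_in_conv)
  have ff: "f * f = f" and fe: "f * e = f" using f(1) by (auto simp: idempotents_below_def)
  have f': "e - f \<in> idempotents_below e" "e - f \<noteq> 0"
    using Suc.prems(1) ff fe f(3) by (auto simp: idempotents_below_def algebra_simps)
  have orth: "f * (e - f) = 0" "(e - f) * f = 0" using ff fe by (simp_all add: algebra_simps)
  from idempotents_below_split_infinite[OF Suc.prems(1) f(1) Suc.prems(2)]
  show ?case using step f f' orth by blast
qed

lemma cozero_adj_iff: "cozero_adj a b \<longleftrightarrow> a \<noteq> b \<and> \<not> b dvd a \<and> \<not> a dvd b"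
  unfolding cozero_adj_def dvd_def by (auto simp: mult.commute)

lemma orthogonal_idempotents_clique:
  fixes S :: "'a::comm_ring_1 set"
  assumes "orthogonal_idempotents S" "2 \<le> card S"
  shows "S \<subseteq> W_star" and "is_clique cozero_adj S"
proof -
  have nonzero: "x \<noteq> 0" and idem: "x * x = x" if "x \<in> S" for x
    using assms(1) that by (auto simp: orthogonal_idempotents_def)
  have orth: "x * y = 0" if "x \<in> S" "y \<in> S" "x \<noteq> y" for x y
    using assms(1) that by (auto simp: orthogonal_idempotents_def pairwise_def)
  have not_dvd: "\<not> y dvd x" if "x \<in> S" "y \<in> S" "x \<noteq> y" for x y
  proof
    assume "y dvd x"
    then obtain k where k: "x = y * k" by (auto elim: dvdE)
    have "x * y = (y * y) * k" by (simp add: k ac_simps)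
    then have "x * y = x" using idem[OF that(2)] k by simp
    then show False using orth[OF that] nonzero[OF that(1)] by simp
  qed
  show "S \<subseteq> W_star"
  proof
    fix s assume s: "s \<in> S"
    have "\<not> S \<subseteq> {s}" using assms(2) card_mono[of "{s}" S] by auto
    then obtain t where t: "t \<in> S" "t \<noteq> s" by blast
    have "\<not> s dvd 1" using not_dvd[OF t(1) s t(2)] dvd_trans[of s 1 t] by auto
    then show "s \<in> W_star" using nonzero[OF s] by (simp add: W_star_def)
  qed
  show "is_clique cozero_adj S"
    unfolding is_clique_def cozero_adj_iff using not_dvd by blast
qed

lemma finite_idempotents_if_clique_number_finite:
  assumes "clique_number (W_star :: 'a::comm_ring_1 set) cozero_adj < \<infinity>"
  shows "finite {e :: 'a. e * e = e}"
proof (rule ccontr)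
  assume inf: "infinite {e :: 'a. e * e = e}"
  obtain w where w: "clique_number (W_star :: 'a set) cozero_adj = enat w"
    using assms by (cases "clique_number (W_star :: 'a set) cozero_adj") auto
  have "infinite (idempotents_below (1 :: 'a))" using inf by (simp add: idempotents_below_def)
  then obtain S :: "'a set" where S: "finite S" "card S = w + 2" "orthogonal_idempotents S"
    using exists_orthogonal_idempotents_below[of 1] by auto
  then have "2 \<le> card S" by simp
  from card_le_clique_number[OF orthogonal_idempotents_clique(1)[OF S(3) this] S(1)
      orthogonal_idempotents_clique(2)[OF S(3) this]]
  show False using w S(2) by simp
qed

lemma von_neumann_regular_associated_idempotent:
  assumes "von_neumann_regular TYPE('a::comm_ring_1)"
  shows "\<exists>e :: 'a. e * e = e \<and> a dvd e \<and> e dvd a"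
proof -
  obtain s :: 'a where s: "a = a^2 * s" using assms by (auto simp: von_neumann_regular_def)
  have "(a * s) * (a * s) = (a^2 * s) * s" by (simp add: power2_eq_square ac_simps)
  then have idem: "(a * s) * (a * s) = a * s" using s by simp
  have "a = (a * s) * a" using s by (simp add: power2_eq_square ac_simps)
  then have "a * s dvd a" by (rule dvdI)
  then show ?thesis using idem by (intro exI[of _ "a * s"]) simp
qed

theorem theorem3p4:
  assumes "von_neumann_regular TYPE('a::comm_ring_1)"
    and "clique_number (W_star :: 'a set) cozero_adj < \<infinity>"
  shows "perfect_graph (W_star :: 'a set) cozero_adj"
proof -
  define \<phi> where "\<phi> a = (SOME e. e * e = e \<and> a dvd e \<and> e dvd a)" for a :: 'a
  have \<phi>: "\<phi> a * \<phi> a = \<phi> a" "a dvd \<phi> a" "\<phi> a dvd a" for a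
    using someI_ex[OF von_neumann_regular_associated_idempotent[OF assms(1)]]
    unfolding \<phi>_def by blast+
  have "\<phi> ` W_star \<subseteq> {e. e * e = e}" using \<phi>(1) by blast
  then have fin: "finite (\<phi> ` W_star)"
    using finite_idempotents_if_clique_number_finite[OF assms(2)] by (rule finite_subset)
  have adj: "cozero_adj x y \<longleftrightarrow> x \<noteq> y \<and> \<not> \<phi> x dvd \<phi> y \<and> \<not> \<phi> y dvd \<phi> x" for x y
    unfolding cozero_adj_iff using \<phi>(2,3) dvd_trans by metis
  have "reflp ((dvd) :: 'a \<Rightarrow> 'a \<Rightarrow> bool)" by (rule reflpI) simp
  moreover have "transp ((dvd) :: 'a \<Rightarrow> 'a \<Rightarrow> bool)" by (rule transpI) (rule dvd_trans)
  ultimately show ?thesis using fin adj by (rule perfect_graph_incomparability)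
qed

end
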